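(* Let $p,q\in[1,\infty]$, let $\varphi_0,\varphi_1,\varphi$ be positive non-degenerate quasi-concave functions on $(0,\infty)$, let $\{\tau_k\}$ be a discretizing sequence for $\varphi_0$, $\{z_k\}$ a discretizing sequence for $\varphi_1$, and $\{\widetilde t_k\}$ a discretizing sequence for $\varphi(\varphi_0,\varphi_1)$. Let $\overline l_q=\big(l_q,\,l_q(1/\widetilde t_k)\big)$. Then $$(\overline l_q)_{\varphi_0,p}=l_p\Big(l_q^{M_k^0}\Big(\frac1{\varphi_0(\widetilde t_i)}\Big)\Big),\qquad (\overline l_q)_{\varphi_1,p}=l_p\Big(l_q^{M_k^1}\Big(\frac1{\varphi_1(\widetilde t_i)}\Big)\Big),$$ where $M_k^0=\{i:\ \tau_k\le\widetilde t_i\le\tau_{k+1}\}$ and $M_k^1=\{i:\ z_k\le\widetilde t_i\le z_{k+1}\}$.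
   Context: A function $\psi:(0,\infty)\to(0,\infty)$ is non-degenerate quasi-concave if it is non-decreasing, $\psi(t)/t$ is non-increasing, and $\lim_{t\to0+}\psi(t)=\lim_{t\to\infty}\psi(t)/t=\lim_{t\to0+}t/\psi(t)=\lim_{t\to\infty}1/\psi(t)=0$. $\varphi(\varphi_0,\varphi_1)(t)=\varphi_0(t)\varphi(\varphi_1(t)/\varphi_0(t))$. A positive sequence is strongly increasing if $\inf_k a_{k+1}/a_k\ge2$, strongly decreasing if $\sup_k a_{k+1}/a_k\le1/2$. A strongly increasing $\{s_k\}_{k\in\mathbb Z}$ is a discretizing sequence for $\psi$ if $\{\psi(s_k)\}$ is strongly increasing, $\{\psi(s_k)/s_k\}$ is strongly decreasing, and $\mathbb Z=\mathbb Z_1\sqcup\mathbb Z_2$ with $\psi(s_{k+1})\le2\psi(s_k)$ for $k\in\mathbb Z_1$ and $\psi(s_k)/s_k\le2\psi(s_{k+1})/s_{k+1}$ for $k\in\mathbb Z_2$. For a Banach couple $\overline X$, $K(t,x;\overline X)=\inf_{x=x_0+x_1}(\|x_0\|_{X_0}+t\|x_1\|_{X_1})$, and $\overline X_{\psi,p}$ is the space of $x\in X_0+X_1$ with $\big(\sum_k(K(s_k,x;\overline X)/\psi(s_k))^p\big)^{1/p}<\infty$ (sup if $p=\infty$), $\{s_k\}$ the given discretizing sequence for $\psi$ (here $\{\tau_k\}$ for $\varphi_0$, $\{z_k\}$ for $\varphi_1$). For a sequence space $E$ and positive weight $u$, $E(u)=\{a:\{a_iu_i\}\in E\}$ with norm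 $\|\{a_iu_i\}\|_E$; $l_p(l_q^{M_k})$ has norm $\big(\sum_k(\sum_{i\in M_k}|a_i|^q)^{p/q}\big)^{1/p}$ (usual modification for $\infty$). Sequences are indexed by $\mathbb Z$; equality means equal sets with equivalent norms. *)

theory Defs
  imports "HOL-Analysis.Analysis"
begin

definition nd_quasi_concave :: "(real \<Rightarrow> real) \<Rightarrow> bool" where
  "nd_quasi_concave \<psi> \<longleftrightarrow>
     (\<forall>t>0. \<psi> t > 0) \<and>
     mono_on {0<..} \<psi> \<and>
     antimono_on {0<..} (\<lambda>t. \<psi> t / t) \<and>
     (\<psi> \<longlongrightarrow> 0) (at_right 0) \<and>
     ((\<lambda>t. \<psi> t / t) \<longlongrightarrow> 0) at_top \<and>
     ((\<lambda>t. t / \<psi> t) \<longlongrightarrow> 0) (at_right 0) \<and>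
     ((\<lambda>t. 1 / \<psi> t) \<longlongrightarrow> 0) at_top"

definition compose_qc :: "(real \<Rightarrow> real) \<Rightarrow> (real \<Rightarrow> real) \<Rightarrow> (real \<Rightarrow> real) \<Rightarrow> real \<Rightarrow> real" where
  "compose_qc \<phi> \<phi>0 \<phi>1 t = \<phi>0 t * \<phi> (\<phi>1 t / \<phi>0 t)"

definition strongly_increasing :: "(int \<Rightarrow> real) \<Rightarrow> bool" where
  "strongly_increasing a \<longleftrightarrow> (\<forall>k. a k > 0) \<and> (\<forall>k. a (k + 1) / a k \<ge> 2)"

definition strongly_decreasing :: "(int \<Rightarrow> real) \<Rightarrow> bool" where
  "strongly_decreasing a \<longleftrightarrow> (\<forall>k. a k > 0) \<and> (\<forall>k. a (k + 1) / a k \<le> 1 / 2)"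

definition discretizing_seq :: "(real \<Rightarrow> real) \<Rightarrow> (int \<Rightarrow> real) \<Rightarrow> bool" where
  "discretizing_seq \<psi> s \<longleftrightarrow>
     strongly_increasing s \<and>
     strongly_increasing (\<lambda>k. \<psi> (s k)) \<and>
     strongly_decreasing (\<lambda>k. \<psi> (s k) / s k) \<and>
     (\<exists>Z1 Z2. Z1 \<inter> Z2 = {} \<and> Z1 \<union> Z2 = (UNIV :: int set) \<and>
        (\<forall>k\<in>Z1. \<psi> (s (k + 1)) \<le> 2 * \<psi> (s k)) \<and>
        (\<forall>k\<in>Z2. \<psi> (s k) / s k \<le> 2 * (\<psi> (s (k + 1)) / s (k + 1))))"

section \<open>Sequence-space norms (valued in [0,\<infinity>]; \<infinity> means "not in the space")\<close>

definition enn_rpow :: "ennreal \<Rightarrow> real \<Rightarrow> ennreal" where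
  "enn_rpow x r = (if x = top then top else ennreal (enn2real x powr r))"

definition lp_on :: "ennreal \<Rightarrow> 'i set \<Rightarrow> ('i \<Rightarrow> ennreal) \<Rightarrow> ennreal" where
  "lp_on p A f = (if p = top then (SUP i\<in>A. f i)
                  else enn_rpow (\<Sum>\<^sub>\<infinity> i\<in>A. enn_rpow (f i) (enn2real p)) (1 / enn2real p))"

definition lq_norm :: "ennreal \<Rightarrow> (int \<Rightarrow> real) \<Rightarrow> ennreal" where
  "lq_norm q a = lp_on q UNIV (\<lambda>i. ennreal \<bar>a i\<bar>)"

definition weighted :: "((int \<Rightarrow> real) \<Rightarrow> ennreal) \<Rightarrow> (int \<Rightarrow> real) \<Rightarrow> (int \<Rightarrow> real) \<Rightarrow> ennreal" where
  "weighted E u a = E (\<lambda>i. a i * u i)"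

definition lp_lq_blocks :: "ennreal \<Rightarrow> ennreal \<Rightarrow> (int \<Rightarrow> int set) \<Rightarrow> (int \<Rightarrow> real) \<Rightarrow> ennreal" where
  "lp_lq_blocks p q M a = lp_on p UNIV (\<lambda>k. lp_on q (M k) (\<lambda>i. ennreal \<bar>a i\<bar>))"

text \<open>A Banach couple of sequence spaces is given by its two norms
  \<open>N0, N1\<close> (with value \<infinity> outside the respective space).\<close>
definition K_fun :: "((int \<Rightarrow> real) \<Rightarrow> ennreal) \<Rightarrow> ((int \<Rightarrow> real) \<Rightarrow> ennreal) \<Rightarrow> real \<Rightarrow> (int \<Rightarrow> real) \<Rightarrow> ennreal" where
  "K_fun N0 N1 t x = (INF x0. N0 x0 + ennreal t * N1 (\<lambda>i. x i - x0 i))"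

text \<open>Norm of \<open>(X\<^sub>0,X\<^sub>1)\<^sub>\<psi>\<^sub>,\<^sub>p\<close> w.r.t. the discretizing sequence \<open>s\<close>; the space is
  the set of \<open>x\<close> with finite norm (this forces \<open>x \<in> X\<^sub>0+X\<^sub>1\<close>).\<close>
definition interp_norm :: "((int \<Rightarrow> real) \<Rightarrow> ennreal) \<Rightarrow> ((int \<Rightarrow> real) \<Rightarrow> ennreal) \<Rightarrow>
    (real \<Rightarrow> real) \<Rightarrow> (int \<Rightarrow> real) \<Rightarrow> ennreal \<Rightarrow> (int \<Rightarrow> real) \<Rightarrow> ennreal" where
  "interp_norm N0 N1 \<psi> s p x = lp_on p UNIV (\<lambda>k. K_fun N0 N1 (s k) x / ennreal (\<psi> (s k)))"

text \<open>Equality of normed spaces: same sets and equivalent norms.\<close>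
definition equiv_norms :: "('a \<Rightarrow> ennreal) \<Rightarrow> ('a \<Rightarrow> ennreal) \<Rightarrow> bool" where
  "equiv_norms N N' \<longleftrightarrow> (\<exists>c C :: real. c > 0 \<and> C > 0 \<and>
      (\<forall>x. ennreal c * N x \<le> N' x \<and> N' x \<le> ennreal C * N x))"

end

theory Submission
  imports Defs
begin

text \<open>For the couple \<open>(l\<^sub>q, l\<^sub>q(1/w))\<close> the K-functional agrees with
  \<open>\<parallel>min(1, t/w\<^sub>i) x\<^sub>i\<parallel>\<^sub>q\<close> up to the factors 2 and 4 (split \<open>x\<close> at the indices with \<open>w\<^sub>i \<le> t\<close>).
  Hence, writing \<open>Y\<^sub>i = |x\<^sub>i| / \<psi>(t\<^sub>i)\<close>, the \<open>(\<psi>, p)\<close>-norm with respect to a discretizing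
  sequence \<open>s\<close> of \<open>\<psi>\<close> is equivalent to the \<open>l\<^sub>p\<close>-norm over \<open>k\<close> of \<open>\<parallel>kernel k t\<^sub>i * Y\<^sub>i\<parallel>\<^sub>q\<close>,
  where \<open>kernel k t = min(1, s\<^sub>k/t) \<psi>(t) / \<psi>(s\<^sub>k)\<close>. For \<open>t \<in> [s\<^sub>j, s\<^sub>j\<^sub>+\<^sub>1]\<close> this kernel is at
  most \<open>2 * 2^-|k - j|\<close>, because \<open>\<psi>(s\<^sub>k)\<close> at least doubles and \<open>\<psi>(s\<^sub>k)/s\<^sub>k\<close> at least halves
  from one \<open>k\<close> to the next; a discrete convolution with a summable geometric sequence then
  bounds the norm by the block norm \<open>l\<^sub>p(l\<^sub>q\<^bsup>M\<^sub>k\<^esup>)\<close> of \<open>Y\<close>. Conversely, the splitting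
  \<open>\<int> = \<int>\<^sub>1 \<union> \<int>\<^sub>2\<close> in the definition of a discretizing sequence makes \<open>kernel k\<close> or
  \<open>kernel (k + 1)\<close> at least \<open>1/2\<close> on the block \<open>M\<^sub>k\<close>.\<close>

section \<open>Real powers and sums in \<open>[0, \<infinity>]\<close>\<close>

lemma enn_rpow_ennreal: "0 \<le> x \<Longrightarrow> enn_rpow (ennreal x) r = ennreal (x powr r)"
  by (simp add: enn_rpow_def)

lemma enn_rpow_top [simp]: "enn_rpow top r = top"
  by (simp add: enn_rpow_def)

lemma enn_rpow_0 [simp]: "enn_rpow 0 r = 0"
  by (simp add: enn_rpow_def)

lemma enn_rpow_mono: "0 < r \<Longrightarrow> x \<le> y \<Longrightarrow> enn_rpow x r \<le> enn_rpow y r"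
proof (cases y)
  case (real b)
  assume "0 < r" and "x \<le> y"
  moreover obtain a where "0 \<le> a" "x = ennreal a"
    using \<open>x \<le> y\<close> real by (cases x) (auto simp: top_unique)
  ultimately show ?thesis
    using real by (simp add: enn_rpow_ennreal powr_mono2)
qed simp

lemma enn_rpow_enn_rpow_inverse: "0 < r \<Longrightarrow> enn_rpow (enn_rpow x r) (1 / r) = x"
  by (cases x) (simp_all add: enn_rpow_ennreal powr_powr)

lemma enn_rpow_inverse_enn_rpow: "0 < r \<Longrightarrow> enn_rpow (enn_rpow x (1 / r)) r = x"
  using enn_rpow_enn_rpow_inverse[of "1 / r" x] by simp

lemma enn_rpow_le_iff: "0 < r \<Longrightarrow> enn_rpow x r \<le> enn_rpow y r \<longleftrightarrow> x \<le> y"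
  by (metis enn_rpow_enn_rpow_inverse enn_rpow_mono divide_pos_pos zero_less_one)

lemma enn_rpow_max: "0 < r \<Longrightarrow> enn_rpow (max x y) r = max (enn_rpow x r) (enn_rpow y r)"
  by (metis enn_rpow_le_iff max.absorb1 max.absorb2 nle_le)

lemma enn_rpow_mult: "0 < r \<Longrightarrow> enn_rpow (x * y) r = enn_rpow x r * enn_rpow y r"
proof (cases "x = 0 \<or> y = 0")
  case False
  assume r: "0 < r"
  have nonzero: "enn_rpow u r \<noteq> 0" if "u \<noteq> 0" for u
    using that r by (metis enn_rpow_0 enn_rpow_enn_rpow_inverse)
  show ?thesis
  proof (cases x; cases y)
    fix a b assume "0 \<le> a" "x = ennreal a" "0 \<le> b" "y = ennreal b"
    then show ?thesis
      by (simp add: enn_rpow_ennreal powr_mult ennreal_mult[symmetric])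
  qed (use False nonzero in \<open>auto simp: ennreal_top_mult ennreal_mult_top\<close>)
qed auto

lemma ennreal_le_enn_rpow: "1 \<le> c \<Longrightarrow> 1 \<le> r \<Longrightarrow> ennreal c \<le> enn_rpow (ennreal c) r"
  using powr_mono[of 1 r c] by (simp add: enn_rpow_ennreal)

lemma ennreal_summable_on [simp]: "(f :: _ \<Rightarrow> ennreal) summable_on A"
  by (simp add: nonneg_summable_on_complete)

lemma infsum_mono_ennreal: "(\<And>i. i \<in> A \<Longrightarrow> f i \<le> g i) \<Longrightarrow> infsum f A \<le> (infsum g A :: ennreal)"
  by (rule infsum_mono) auto

lemma infsum_mono_set_ennreal: "A \<subseteq> B \<Longrightarrow> infsum f A \<le> (infsum f B :: ennreal)"
  by (rule infsum_mono_neutral) auto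

lemma infsum_ge_term_ennreal: "i \<in> A \<Longrightarrow> f i \<le> (infsum f A :: ennreal)"
  using infsum_mono_set_ennreal[of "{i}" A f] by simp

lemma infsum_ennreal_eq_SUP: "infsum f A = (SUP F\<in>{F. finite F \<and> F \<subseteq> A}. sum f F :: ennreal)"
  by (rule nonneg_infsum_complete) auto

lemma infsum_cmult_ennreal: "infsum (\<lambda>i. c * f i) A = c * (infsum f A :: ennreal)"
  unfolding infsum_ennreal_eq_SUP SUP_mult_left_ennreal by (simp add: sum_distrib_left)

lemma infsum_sum_ennreal:
  "finite F \<Longrightarrow> infsum (\<lambda>j. \<Sum>i\<in>F. f i j) B = (\<Sum>i\<in>F. infsum (f i) B :: ennreal)"
  by (induction F rule: finite_induct) (simp_all add: infsum_add)

lemma infsum_swap_le_ennreal: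
  "infsum (\<lambda>i. infsum (f i) B) A \<le> (infsum (\<lambda>j. infsum (\<lambda>i. f i j) A) B :: ennreal)"
proof -
  have "(\<Sum>i\<in>F. infsum (f i) B) \<le> infsum (\<lambda>j. infsum (\<lambda>i. f i j) A) B"
    if F: "finite F" "F \<subseteq> A" for F
  proof -
    have "(\<Sum>i\<in>F. infsum (f i) B) = infsum (\<lambda>j. \<Sum>i\<in>F. f i j) B"
      using F by (simp add: infsum_sum_ennreal)
    also have "\<dots> \<le> infsum (\<lambda>j. infsum (\<lambda>i. f i j) A) B"
      using F infsum_mono_set_ennreal[OF F(2)] by (intro infsum_mono_ennreal) simp
    finally show ?thesis .
  qed
  then show ?thesis
    unfolding infsum_ennreal_eq_SUP[of "\<lambda>i. infsum (f i) B" A] by (auto intro!: SUP_least)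
qed

lemma infsum_swap_ennreal:
  "infsum (\<lambda>i. infsum (f i) B) A = (infsum (\<lambda>j. infsum (\<lambda>i. f i j) A) B :: ennreal)"
  using infsum_swap_le_ennreal[of f B A] infsum_swap_le_ennreal[of "\<lambda>j i. f i j" A B]
  by (rule antisym)

lemma infsum_le_regroup_ennreal:
  fixes f g :: "'i \<Rightarrow> ennreal" and c :: "'m \<Rightarrow> ennreal"
  assumes block: "\<And>i. i \<in> M (j i)" and le: "\<And>i. f i \<le> c (j i) * g i"
  shows "(\<Sum>\<^sub>\<infinity>i. f i) \<le> (\<Sum>\<^sub>\<infinity>m. c m * (\<Sum>\<^sub>\<infinity>i\<in>M m. g i))"
proof -
  let ?h = "\<lambda>i m. if i \<in> M m then c m * g i else 0"
  have "f i \<le> (\<Sum>\<^sub>\<infinity>m. ?h i m)" for i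
    using le[of i] block[of i] infsum_ge_term_ennreal[of "j i" UNIV "?h i"] by simp
  then have "(\<Sum>\<^sub>\<infinity>i. f i) \<le> (\<Sum>\<^sub>\<infinity>i. \<Sum>\<^sub>\<infinity>m. ?h i m)"
    by (rule infsum_mono_ennreal)
  also have "\<dots> = (\<Sum>\<^sub>\<infinity>m. \<Sum>\<^sub>\<infinity>i. ?h i m)"
    by (rule infsum_swap_ennreal)
  also have "\<dots> = (\<Sum>\<^sub>\<infinity>m. c m * (\<Sum>\<^sub>\<infinity>i\<in>M m. g i))"
  proof (rule infsum_cong)
    fix m
    have "(\<Sum>\<^sub>\<infinity>i. ?h i m) = (\<Sum>\<^sub>\<infinity>i\<in>M m. c m * g i)"
      by (rule infsum_cong_neutral) auto
    then show "(\<Sum>\<^sub>\<infinity>i. ?h i m) = c m * (\<Sum>\<^sub>\<infinity>i\<in>M m. g i)"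
      by (simp add: infsum_cmult_ennreal)
  qed
  finally show ?thesis .
qed

lemma infsum_geometric_abs_diff_le:
  fixes r :: real
  assumes "0 \<le> r" "r \<le> 3/4"
  shows "(\<Sum>\<^sub>\<infinity>j::int. ennreal (r ^ nat \<bar>k - j\<bar>)) \<le> 8"
proof -
  have injective_sum_le: "(\<Sum>j\<in>F. r ^ g j) \<le> 4"
    if "finite F" "inj_on g F" for F and g :: "int \<Rightarrow> nat"
  proof -
    have "(\<Sum>j\<in>F. r ^ g j) = (\<Sum>n\<in>g ` F. r ^ n)"
      using that by (simp add: sum.reindex)
    also have "\<dots> \<le> (\<Sum>n. r ^ n)"
      by (rule sum_le_suminf) (use assms that in \<open>auto intro: summable_geometric\<close>)
    also have "\<dots> = 1 / (1 - r)"
      using assms by (simp add: suminf_geometric)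
    also have "\<dots> \<le> 4"
      using assms by (simp add: field_simps)
    finally show ?thesis .
  qed
  have "(\<Sum>j\<in>F. ennreal (r ^ nat \<bar>k - j\<bar>)) \<le> 8" if F: "finite F" for F
  proof -
    have "(\<Sum>j\<in>F. r ^ nat \<bar>k - j\<bar>)
        = (\<Sum>j\<in>F \<inter> {..k}. r ^ nat \<bar>k - j\<bar>) + (\<Sum>j\<in>F - {..k}. r ^ nat \<bar>k - j\<bar>)"
      using F by (rule sum.Int_Diff)
    also have "\<dots> \<le> 4 + 4"
      by (intro add_mono injective_sum_le) (use F in \<open>auto simp: inj_on_def\<close>)
    finally show ?thesis
      using assms by (simp add: sum_ennreal flip: ennreal_numeral)
  qed
  then show ?thesis
    unfolding infsum_ennreal_eq_SUP by (auto intro!: SUP_least)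
qed

lemma enn2real_ge_1: "1 \<le> p \<Longrightarrow> p \<noteq> top \<Longrightarrow> 1 \<le> enn2real p"
  using enn2real_mono[of 1 p] by (simp add: top.not_eq_extremum)

lemma lp_on_finite: "p \<noteq> top \<Longrightarrow>
    lp_on p A f = enn_rpow (\<Sum>\<^sub>\<infinity>i\<in>A. enn_rpow (f i) (enn2real p)) (1 / enn2real p)"
  by (simp add: lp_on_def)

lemma lp_on_top: "lp_on top A f = (SUP i\<in>A. f i)"
  by (simp add: lp_on_def)

lemma enn_rpow_lp_on:
  "1 \<le> p \<Longrightarrow> p \<noteq> top \<Longrightarrow>
    enn_rpow (lp_on p A f) (enn2real p) = (\<Sum>\<^sub>\<infinity>i\<in>A. enn_rpow (f i) (enn2real p))"
  using enn2real_ge_1[of p] by (simp add: lp_on_finite enn_rpow_inverse_enn_rpow)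

lemma lp_on_le_if_infsum_le:
  assumes "1 \<le> p" "p \<noteq> top"
    and "(\<Sum>\<^sub>\<infinity>i\<in>A. enn_rpow (f i) (enn2real p)) \<le> enn_rpow c (enn2real p)"
  shows "lp_on p A f \<le> c"
  using assms enn2real_ge_1[of p] enn_rpow_le_iff[of "enn2real p" "lp_on p A f" c]
  by (simp add: enn_rpow_lp_on)

lemma lp_on_mono_set:
  assumes p: "1 \<le> p" and AB: "A \<subseteq> B" and fg: "\<And>i. i \<in> A \<Longrightarrow> f i \<le> g i"
  shows "lp_on p A f \<le> lp_on p B g"
proof (cases "p = top")
  case True
  then show ?thesis using AB fg by (simp add: lp_on_top SUP_subset_mono)
next
  case False
  let ?r = "enn2real p"
  have r: "0 < ?r" using enn2real_ge_1[OF p False] by simp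
  have "(\<Sum>\<^sub>\<infinity>i\<in>A. enn_rpow (f i) ?r) \<le> (\<Sum>\<^sub>\<infinity>i\<in>A. enn_rpow (g i) ?r)"
    using fg r by (intro infsum_mono_ennreal enn_rpow_mono)
  also have "\<dots> \<le> (\<Sum>\<^sub>\<infinity>i\<in>B. enn_rpow (g i) ?r)"
    by (rule infsum_mono_set_ennreal[OF AB])
  finally show ?thesis using False r by (simp add: lp_on_finite enn_rpow_mono)
qed

lemma lp_on_mono: "1 \<le> p \<Longrightarrow> (\<And>i. i \<in> A \<Longrightarrow> f i \<le> g i) \<Longrightarrow> lp_on p A f \<le> lp_on p A g"
  by (rule lp_on_mono_set) auto

lemma lp_on_subset: "1 \<le> p \<Longrightarrow> A \<subseteq> B \<Longrightarrow> lp_on p A f \<le> lp_on p B f"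
  by (rule lp_on_mono_set) auto

lemma lp_on_ge_term:
  assumes p: "1 \<le> p" and i: "i \<in> A"
  shows "f i \<le> lp_on p A f"
  using lp_on_subset[OF p, of "{i}" A f] i enn2real_ge_1[OF p]
  by (cases "p = top") (simp_all add: lp_on_top lp_on_finite enn_rpow_enn_rpow_inverse)

lemma lp_on_cmult:
  assumes p: "1 \<le> p" and c: "c \<noteq> top"
  shows "lp_on p A (\<lambda>i. c * f i) = c * lp_on p A f"
proof (cases "p = top")
  case True
  then show ?thesis by (simp add: lp_on_top SUP_mult_left_ennreal)
next
  case False
  let ?r = "enn2real p"
  have r: "0 < ?r" using enn2real_ge_1[OF p False] by simp
  then have "(\<Sum>\<^sub>\<infinity>i\<in>A. enn_rpow (c * f i) ?r) = enn_rpow c ?r * (\<Sum>\<^sub>\<infinity>i\<in>A. enn_rpow (f i) ?r)"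
    by (simp add: enn_rpow_mult infsum_cmult_ennreal)
  then show ?thesis
    using r False by (simp add: lp_on_finite enn_rpow_mult enn_rpow_enn_rpow_inverse)
qed

lemma lp_on_max_le:
  assumes p: "1 \<le> p"
  shows "lp_on p A (\<lambda>i. max (f i) (g i)) \<le> 2 * (lp_on p A f + lp_on p A g)"
proof (cases "p = top")
  case True
  have "(SUP i\<in>A. max (f i) (g i)) \<le> (SUP i\<in>A. f i) + (SUP i\<in>A. g i)"
    by (rule SUP_least) (auto intro: add_increasing add_increasing2 SUP_upper)
  also have "\<dots> \<le> 2 * ((SUP i\<in>A. f i) + (SUP i\<in>A. g i))"
    by (simp add: mult_2)
  finally show ?thesis using True by (simp only: lp_on_top)
next
  case False
  let ?r = "enn2real p"
  have r: "1 \<le> ?r" using enn2real_ge_1[OF p False] .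
  then have r0: "0 < ?r" by simp
  define S where "S = (\<Sum>\<^sub>\<infinity>i\<in>A. enn_rpow (f i) ?r)"
  define T where "T = (\<Sum>\<^sub>\<infinity>i\<in>A. enn_rpow (g i) ?r)"
  have "(\<Sum>\<^sub>\<infinity>i\<in>A. enn_rpow (max (f i) (g i)) ?r) \<le> (\<Sum>\<^sub>\<infinity>i\<in>A. enn_rpow (f i) ?r + enn_rpow (g i) ?r)"
    by (rule infsum_mono_ennreal) (simp add: enn_rpow_max[OF r0] add_increasing add_increasing2)
  also have "\<dots> = S + T" by (simp add: infsum_add S_def T_def)
  also have "\<dots> \<le> 2 * max S T" by (simp add: mult_2 add_mono)
  finally have "lp_on p A (\<lambda>i. max (f i) (g i)) \<le> enn_rpow (2 * max S T) (1 / ?r)"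
    using False r0 by (simp add: lp_on_finite enn_rpow_mono)
  also have "\<dots> = enn_rpow 2 (1 / ?r) * max (enn_rpow S (1 / ?r)) (enn_rpow T (1 / ?r))"
    using r0 by (simp add: enn_rpow_mult enn_rpow_max)
  also have "\<dots> \<le> 2 * (enn_rpow S (1 / ?r) + enn_rpow T (1 / ?r))"
  proof (rule mult_mono)
    have "2 powr (1 / ?r) \<le> 2 powr 1" using r by (intro powr_mono) auto
    then show "enn_rpow 2 (1 / ?r) \<le> 2"
      using enn_rpow_ennreal[of 2 "1 / ?r"] by (simp add: ennreal_leI[of _ 2, simplified])
  qed (auto simp: add_increasing add_increasing2)
  finally show ?thesis using False by (simp add: lp_on_finite S_def T_def)
qed

lemma lp_on_add_le:
  assumes p: "1 \<le> p"
  shows "lp_on p A (\<lambda>i. f i + g i) \<le> 4 * (lp_on p A f + lp_on p A g)"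
proof -
  have "lp_on p A (\<lambda>i. f i + g i) \<le> lp_on p A (\<lambda>i. 2 * max (f i) (g i))"
    by (rule lp_on_mono[OF p]) (simp add: mult_2 add_mono)
  also have "\<dots> = 2 * lp_on p A (\<lambda>i. max (f i) (g i))"
    by (rule lp_on_cmult[OF p]) simp
  also have "\<dots> \<le> 2 * (2 * (lp_on p A f + lp_on p A g))"
    by (rule mult_left_mono[OF lp_on_max_le[OF p]]) simp
  finally show ?thesis by (simp add: mult.assoc[symmetric])
qed

lemma lp_on_shift: "lp_on p UNIV (\<lambda>k. f (k + (1::int))) = lp_on p UNIV f"
proof -
  have bij: "bij_betw (\<lambda>k. k + 1) UNIV (UNIV :: int set)"
    by (auto simp: bij_betw_def inj_on_def image_def intro: exI[of _ "_ - 1"])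
  then have "(SUP k. f (k + 1)) = (SUP k. f k)"
    unfolding bij_betw_def by (metis image_image)
  with bij show ?thesis
    by (simp add: lp_on_def infsum_reindex_bij_betw[OF bij, of "\<lambda>k. enn_rpow (f k) _"])
qed

lemma power_powr_commute: "0 < (x::real) \<Longrightarrow> (x ^ n) powr r = (x powr r) ^ n"
  by (simp add: powr_realpow[symmetric] powr_powr mult.commute)

lemma lp_on_SUP_geometric_le:
  assumes p: "1 \<le> p"
  shows "lp_on p UNIV (\<lambda>k. SUP j. ennreal ((3/4) ^ nat \<bar>k - j\<bar>) * B j) \<le> 8 * lp_on p UNIV B"
proof (cases "p = top")
  case True
  have "ennreal ((3/4) ^ nat \<bar>k - j\<bar>) * B j \<le> 1 * (SUP j. B j)" for k j :: int
    by (intro mult_mono SUP_upper) (auto simp: power_le_one)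
  then have "(SUP k. SUP j. ennreal ((3/4) ^ nat \<bar>k - j\<bar>) * B j) \<le> 1 * (SUP j. B j)"
    by (intro SUP_least) auto
  also have "\<dots> \<le> 8 * (SUP j. B j)"
    by (intro mult_right_mono) auto
  finally show ?thesis
    using True by (simp add: lp_on_top)
next
  case False
  let ?r = "enn2real p"
  have r: "1 \<le> ?r" using enn2real_ge_1[OF p False] .
  let ?u = "\<lambda>k j. ennreal ((3/4) ^ nat \<bar>k - j\<bar>) * B j"
  define c where "c n = ennreal (((3/4) powr ?r) ^ n)" for n
  have row: "enn_rpow (SUP j. ?u k j) ?r \<le> (\<Sum>\<^sub>\<infinity>j. c (nat \<bar>k - j\<bar>) * enn_rpow (B j) ?r)" for k
  proof -
    have "(SUP j. ?u k j) \<le> lp_on p UNIV (?u k)"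
      by (intro SUP_least lp_on_ge_term[OF p]) auto
    then have "enn_rpow (SUP j. ?u k j) ?r \<le> enn_rpow (lp_on p UNIV (?u k)) ?r"
      using r by (intro enn_rpow_mono) auto
    also have "\<dots> = (\<Sum>\<^sub>\<infinity>j. c (nat \<bar>k - j\<bar>) * enn_rpow (B j) ?r)"
      using r by (simp add: enn_rpow_lp_on[OF p False] c_def enn_rpow_mult enn_rpow_ennreal
          power_powr_commute)
    finally show ?thesis .
  qed
  have "(\<Sum>\<^sub>\<infinity>k. enn_rpow (SUP j. ?u k j) ?r)
      \<le> (\<Sum>\<^sub>\<infinity>k. \<Sum>\<^sub>\<infinity>j. c (nat \<bar>k - j\<bar>) * enn_rpow (B j) ?r)"
    by (rule infsum_mono_ennreal[OF row])
  also have "\<dots> = (\<Sum>\<^sub>\<infinity>j. \<Sum>\<^sub>\<infinity>k. c (nat \<bar>k - j\<bar>) * enn_rpow (B j) ?r)"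
    by (rule infsum_swap_ennreal)
  also have "\<dots> = (\<Sum>\<^sub>\<infinity>j. enn_rpow (B j) ?r * (\<Sum>\<^sub>\<infinity>k. c (nat \<bar>j - k\<bar>)))"
    by (simp add: infsum_cmult_ennreal[symmetric] abs_minus_commute mult.commute)
  also have "\<dots> \<le> (\<Sum>\<^sub>\<infinity>j. enn_rpow (B j) ?r * 8)"
    using powr_mono'[of 1 ?r "3/4"] r unfolding c_def
    by (intro infsum_mono_ennreal mult_left_mono infsum_geometric_abs_diff_le) auto
  also have "\<dots> = 8 * enn_rpow (lp_on p UNIV B) ?r"
    by (simp add: infsum_cmult_ennreal[symmetric] enn_rpow_lp_on[OF p False] mult.commute)
  also have "\<dots> \<le> enn_rpow (8 * lp_on p UNIV B) ?r"
    using ennreal_le_enn_rpow[of 8 ?r] r by (simp add: enn_rpow_mult mult_right_mono)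
  finally show ?thesis
    by (rule lp_on_le_if_infsum_le[OF p False])
qed

text \<open>In the two lemmas below the decay factor is split as \<open>(1/2)\<^sup>n = (2/3)\<^sup>n (3/4)\<^sup>n\<close>:
  the factor \<open>(3/4)\<^sup>n\<close> is absorbed into the supremum, the factor \<open>(2/3)\<^sup>n\<close> is summed.\<close>

lemma infsum_decay_powr_le:
  assumes r: "1 \<le> r" and BV: "\<And>m. ennreal ((3/4) ^ nat \<bar>k - m\<bar>) * B m \<le> V"
  shows "(\<Sum>\<^sub>\<infinity>m. ennreal ((2 * (1/2) ^ nat \<bar>k - m\<bar>) powr r) * enn_rpow (B m) r)
    \<le> enn_rpow (16 * V) r"
proof -
  let ?w = "\<lambda>m. ennreal (2 powr r) * ennreal (((2/3) powr r) ^ nat \<bar>k - m\<bar>)"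
  have "ennreal ((2 * (1/2) ^ nat \<bar>k - m\<bar>) powr r) * enn_rpow (B m) r \<le> ?w m * enn_rpow V r" for m
  proof -
    have "(1/2::real) ^ n = (2/3) ^ n * (3/4) ^ n" for n
      by (simp flip: power_mult_distrib)
    then have "ennreal ((2 * (1/2) ^ nat \<bar>k - m\<bar>) powr r)
        = ?w m * ennreal (((3/4) powr r) ^ nat \<bar>k - m\<bar>)"
      by (simp add: powr_mult power_powr_commute ennreal_mult mult.assoc)
    moreover have "ennreal (((3/4) powr r) ^ nat \<bar>k - m\<bar>) * enn_rpow (B m) r
        = enn_rpow (ennreal ((3/4) ^ nat \<bar>k - m\<bar>) * B m) r"
      using r by (simp add: enn_rpow_mult enn_rpow_ennreal power_powr_commute)
    moreover have "\<dots> \<le> enn_rpow V r"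
      using r by (intro enn_rpow_mono BV) auto
    ultimately show ?thesis
      by (simp add: mult.assoc mult_left_mono)
  qed
  then have "(\<Sum>\<^sub>\<infinity>m. ennreal ((2 * (1/2) ^ nat \<bar>k - m\<bar>) powr r) * enn_rpow (B m) r)
      \<le> (\<Sum>\<^sub>\<infinity>m. (ennreal (2 powr r) * enn_rpow V r) * ennreal (((2/3) powr r) ^ nat \<bar>k - m\<bar>))"
    by (intro infsum_mono_ennreal) (simp add: mult_ac)
  also have "\<dots> \<le> (ennreal (2 powr r) * enn_rpow V r) * 8"
    using powr_mono'[of 1 r "2/3"] r
    by (simp only: infsum_cmult_ennreal) (intro mult_left_mono infsum_geometric_abs_diff_le, auto)
  also have "\<dots> \<le> enn_rpow 16 r * enn_rpow V r"
  proof -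
    have "ennreal (2 powr r) * 8 \<le> ennreal (2 powr r) * enn_rpow 8 r"
      using ennreal_le_enn_rpow[of 8 r] r by (intro mult_left_mono) auto
    also have "\<dots> = enn_rpow 16 r"
      using r enn_rpow_mult[of r 2 8] enn_rpow_ennreal[of 2 r] by simp
    finally have "(ennreal (2 powr r) * 8) * enn_rpow V r \<le> enn_rpow 16 r * enn_rpow V r"
      by (rule mult_right_mono) simp
    then show ?thesis
      by (simp add: mult_ac)
  qed
  also have "\<dots> = enn_rpow (16 * V) r"
    using r by (simp add: enn_rpow_mult)
  finally show ?thesis .
qed

lemma lp_on_le_SUP_geometric_blocks:
  fixes G Y :: "'i \<Rightarrow> real" and M :: "int \<Rightarrow> 'i set" and j :: "'i \<Rightarrow> int"
  assumes q: "1 \<le> q" and Y: "\<And>i. 0 \<le> Y i" and G: "\<And>i. 0 \<le> G i"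
    and block: "\<And>i. i \<in> M (j i)"
    and decay: "\<And>i. G i \<le> 2 * (1/2) ^ nat \<bar>k - j i\<bar> * Y i"
  shows "lp_on q UNIV (\<lambda>i. ennreal (G i))
     \<le> 16 * (SUP m. ennreal ((3/4) ^ nat \<bar>k - m\<bar>) * lp_on q (M m) (\<lambda>i. ennreal (Y i)))"
proof -
  define B where "B m = lp_on q (M m) (\<lambda>i. ennreal (Y i))" for m
  define V where "V = (SUP m. ennreal ((3/4) ^ nat \<bar>k - m\<bar>) * B m)"
  have BV: "ennreal ((3/4) ^ nat \<bar>k - m\<bar>) * B m \<le> V" for m
    unfolding V_def by (rule SUP_upper) simp
  have "lp_on q UNIV (\<lambda>i. ennreal (G i)) \<le> 16 * V"
  proof (cases "q = top")
    case True
    have "ennreal (G i) \<le> 2 * V" for i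
    proof -
      let ?n = "nat \<bar>k - j i\<bar>"
      have "2 * (1/2) ^ ?n * Y i \<le> 2 * (3/4) ^ ?n * Y i"
        using Y[of i] power_mono[of "1/2" "3/4::real" ?n]
        by (intro mult_right_mono mult_left_mono) auto
      then have "ennreal (G i) \<le> ennreal (2 * ((3/4) ^ ?n * Y i))"
        using decay[of i] by (intro ennreal_leI) (simp add: mult.assoc)
      also have "\<dots> = 2 * (ennreal ((3/4) ^ ?n) * ennreal (Y i))"
        using Y[of i] by (simp add: ennreal_mult)
      also have "\<dots> \<le> 2 * (ennreal ((3/4) ^ ?n) * B (j i))"
        unfolding B_def by (intro mult_left_mono lp_on_ge_term[OF q block]) auto
      also have "\<dots> \<le> 2 * V"
        by (intro mult_left_mono BV) simp
      finally show ?thesis .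
    qed
    then have "(SUP i. ennreal (G i)) \<le> 16 * V"
      by (intro SUP_least order_trans[OF _ mult_right_mono[of 2 16]]) auto
    then show ?thesis
      using True by (simp add: lp_on_top)
  next
    case False
    let ?r = "enn2real q"
    let ?c = "\<lambda>m. ennreal ((2 * (1/2) ^ nat \<bar>k - m\<bar>) powr ?r)"
    have r: "1 \<le> ?r" using enn2real_ge_1[OF q False] .
    have "enn_rpow (ennreal (G i)) ?r \<le> ?c (j i) * enn_rpow (ennreal (Y i)) ?r" for i
    proof -
      have "G i powr ?r \<le> (2 * (1/2) ^ nat \<bar>k - j i\<bar> * Y i) powr ?r"
        using r G decay by (intro powr_mono2) auto
      then show ?thesis
        using G Y by (simp add: enn_rpow_ennreal powr_mult ennreal_leI flip: ennreal_mult)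
    qed
    then have "(\<Sum>\<^sub>\<infinity>i. enn_rpow (ennreal (G i)) ?r)
        \<le> (\<Sum>\<^sub>\<infinity>m. ?c m * (\<Sum>\<^sub>\<infinity>i\<in>M m. enn_rpow (ennreal (Y i)) ?r))"
      by (rule infsum_le_regroup_ennreal[where M = M and j = j, OF block])
    also have "\<dots> = (\<Sum>\<^sub>\<infinity>m. ?c m * enn_rpow (B m) ?r)"
      by (simp add: B_def enn_rpow_lp_on[OF q False])
    also have "\<dots> \<le> enn_rpow (16 * V) ?r"
      by (rule infsum_decay_powr_le[OF r BV])
    finally show ?thesis
      by (rule lp_on_le_if_infsum_le[OF q False])
  qed
  then show ?thesis
    unfolding V_def B_def .
qed

section \<open>The K-functional of a weighted \<open>l\<^sub>q\<close> couple\<close>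

definition K_lq_approx :: "ennreal \<Rightarrow> (int \<Rightarrow> real) \<Rightarrow> real \<Rightarrow> (int \<Rightarrow> real) \<Rightarrow> ennreal" where
  "K_lq_approx q w t x = lp_on q UNIV (\<lambda>i. ennreal (min 1 (t / w i) * \<bar>x i\<bar>))"

lemma K_fun_weighted_lq_le:
  assumes q: "1 \<le> q" and w: "\<And>i. w i > 0" and t: "t > 0"
  shows "K_fun (lq_norm q) (weighted (lq_norm q) (\<lambda>i. 1 / w i)) t x \<le> 2 * K_lq_approx q w t x"
proof -
  define x0 where "x0 = (\<lambda>i. if w i \<le> t then x i else 0)"
  have truncated: "lq_norm q x0 \<le> K_lq_approx q w t x"
    unfolding lq_norm_def K_lq_approx_def
    using w t by (intro lp_on_mono[OF q] ennreal_leI) (auto simp: x0_def min_def field_simps)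
  have "ennreal t * weighted (lq_norm q) (\<lambda>i. 1 / w i) (\<lambda>i. x i - x0 i)
      = lp_on q UNIV (\<lambda>i. ennreal (t * \<bar>(x i - x0 i) * (1 / w i)\<bar>))"
    unfolding weighted_def lq_norm_def using t
    by (simp add: lp_on_cmult[OF q, symmetric] flip: ennreal_mult)
  also have "\<dots> \<le> K_lq_approx q w t x"
    unfolding K_lq_approx_def
    using w t
    by (intro lp_on_mono[OF q] ennreal_leI) (auto simp: x0_def min_def field_simps abs_mult)
  finally have "lq_norm q x0 + ennreal t * weighted (lq_norm q) (\<lambda>i. 1 / w i) (\<lambda>i. x i - x0 i)
      \<le> 2 * K_lq_approx q w t x"
    using truncated by (simp add: mult_2 add_mono)
  then show ?thesis
    unfolding K_fun_def by (intro INF_lower2[of x0]) auto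
qed

lemma min_ratio_abs_le:
  fixes a b t w :: real
  assumes t: "0 < t" and w: "0 < w"
  shows "min 1 (t / w) * \<bar>a\<bar> \<le> \<bar>b\<bar> + t * \<bar>(a - b) * (1 / w)\<bar>"
proof (cases "w \<le> t")
  case True
  then have "\<bar>a - b\<bar> \<le> t * \<bar>(a - b) * (1 / w)\<bar>"
    using w by (simp add: abs_mult field_simps mult_right_mono)
  moreover have "min 1 (t / w) = 1"
    using True w by (simp add: min_def field_simps)
  ultimately show ?thesis by simp
next
  case False
  have "t / w * \<bar>a\<bar> \<le> t / w * (\<bar>b\<bar> + \<bar>a - b\<bar>)"
    using t w by (intro mult_left_mono) auto
  moreover have "t / w * \<bar>b\<bar> \<le> \<bar>b\<bar>"
    using False t w by (intro mult_left_le_one_le) auto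
  moreover have "min 1 (t / w) = t / w"
    using False w by (simp add: min_def field_simps)
  ultimately show ?thesis
    using w by (simp add: abs_mult distrib_left)
qed

lemma K_lq_approx_le_K_fun:
  assumes q: "1 \<le> q" and w: "\<And>i. w i > 0" and t: "t > 0"
  shows "K_lq_approx q w t x \<le> 4 * K_fun (lq_norm q) (weighted (lq_norm q) (\<lambda>i. 1 / w i)) t x"
proof -
  let ?N1 = "weighted (lq_norm q) (\<lambda>i. 1 / w i)"
  have "ennreal (1/4) * K_lq_approx q w t x \<le> lq_norm q x0 + ennreal t * ?N1 (\<lambda>i. x i - x0 i)" for x0
  proof -
    let ?f = "\<lambda>i. ennreal \<bar>x0 i\<bar>"
    let ?g = "\<lambda>i. ennreal (t * \<bar>(x i - x0 i) * (1 / w i)\<bar>)"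
    have "K_lq_approx q w t x \<le> lp_on q UNIV (\<lambda>i. ?f i + ?g i)"
      unfolding K_lq_approx_def
      using t ennreal_leI[OF min_ratio_abs_le[OF t w]]
      by (intro lp_on_mono[OF q]) (simp add: ennreal_plus[symmetric] del: ennreal_plus)
    also have "\<dots> \<le> 4 * (lp_on q UNIV ?f + lp_on q UNIV ?g)"
      by (rule lp_on_add_le[OF q])
    also have "lp_on q UNIV ?g = ennreal t * ?N1 (\<lambda>i. x i - x0 i)"
      unfolding weighted_def lq_norm_def using t
      by (simp add: lp_on_cmult[OF q, symmetric] flip: ennreal_mult)
    finally have "ennreal (1/4) * K_lq_approx q w t x
        \<le> ennreal (1/4) * (4 * (lq_norm q x0 + ennreal t * ?N1 (\<lambda>i. x i - x0 i)))"
      unfolding lq_norm_def by (rule mult_left_mono) simp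
    then show ?thesis
      by (simp add: mult.assoc[symmetric] flip: ennreal_numeral ennreal_mult)
  qed
  then have "ennreal (1/4) * K_lq_approx q w t x \<le> K_fun (lq_norm q) ?N1 t x"
    unfolding K_fun_def by (rule INF_greatest)
  then have "4 * (ennreal (1/4) * K_lq_approx q w t x) \<le> 4 * K_fun (lq_norm q) ?N1 t x"
    by (rule mult_left_mono) simp
  then show ?thesis
    by (simp add: mult.assoc[symmetric] flip: ennreal_numeral ennreal_mult)
qed

section \<open>Strongly monotone sequences\<close>

lemma strongly_increasing_doubling: "strongly_increasing a \<Longrightarrow> 2 * a k \<le> a (k + 1)"
  unfolding strongly_increasing_def by (metis pos_le_divide_eq)

lemma strongly_decreasing_halving: "strongly_decreasing a \<Longrightarrow> 2 * a (k + 1) \<le> a k"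
proof -
  assume "strongly_decreasing a"
  then have "a k > 0" "a (k + 1) / a k \<le> 1 / 2"
    by (auto simp: strongly_decreasing_def)
  then show ?thesis
    by (simp add: field_simps)
qed

lemma doubling_power_le:
  fixes b :: "int \<Rightarrow> real"
  assumes doubling: "\<And>k. 2 * b k \<le> b (k + 1)" and "j \<le> k"
  shows "b j * 2 ^ nat (k - j) \<le> b k"
  using \<open>j \<le> k\<close>
proof (induction k rule: int_ge_induct)
  case (step i)
  have "nat (i + 1 - j) = Suc (nat (i - j))"
    using step.hyps by simp
  then have "b j * 2 ^ nat (i + 1 - j) = 2 * (b j * 2 ^ nat (i - j))"
    by simp
  also have "\<dots> \<le> 2 * b i" using step.IH by simp
  also have "\<dots> \<le> b (i + 1)" by (rule doubling)
  finally show ?case .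
qed simp

lemma halving_power_le:
  fixes b :: "int \<Rightarrow> real"
  assumes "\<And>k. 2 * b (k + 1) \<le> b k" and "j \<le> k"
  shows "b k * 2 ^ nat (k - j) \<le> b j"
proof -
  have "2 * b (- i) \<le> b (- (i + 1))" for i
    using assms(1)[of "- i - 1"] by simp
  then show ?thesis
    using doubling_power_le[of "\<lambda>i. b (- i)" "- k" "- j"] assms(2) by (simp add: add.commute)
qed

lemma int_crossing:
  fixes s :: "int \<Rightarrow> real"
  assumes "s a \<le> t" "t < s (a + int n)"
  shows "\<exists>j. s j \<le> t \<and> t < s (j + 1)"
  using assms
proof (induction n arbitrary: a)
  case (Suc n)
  show ?case
  proof (cases "t < s (a + 1)")
    case True
    with Suc.prems show ?thesis by blast
  next
    case False
    then show ?thesis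
      using Suc.IH[of "a + 1"] Suc.prems by (simp add: add.assoc)
  qed
qed simp

lemma strongly_increasing_bracket:
  assumes s: "strongly_increasing s" and t: "t > 0"
  shows "\<exists>j. s j \<le> t \<and> t < s (j + 1)"
proof -
  have pos: "s k > 0" for k
    using s by (simp add: strongly_increasing_def)
  have doubling: "2 * s k \<le> s (k + 1)" for k
    using s by (rule strongly_increasing_doubling)
  obtain n :: nat where n: "max (s 0 / t) (t / s 0) < 2 ^ n"
    using real_arch_pow[of 2 "max (s 0 / t) (t / s 0)"] by auto
  have "s (- int n) * 2 ^ n \<le> s 0"
    using doubling_power_le[of s "- int n" 0] doubling by simp
  moreover have "s 0 < t * 2 ^ n"
    using n t by (simp add: pos_divide_less_eq mult.commute)
  ultimately have "s (- int n) * 2 ^ n < t * 2 ^ n"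
    by linarith
  then have lower: "s (- int n) \<le> t"
    using mult_right_less_imp_less[of "s (- int n)" "2 ^ n" t] by simp
  have "s 0 * 2 ^ n \<le> s (int n)"
    using doubling_power_le[of s 0 "int n"] doubling by simp
  moreover have "t < s 0 * 2 ^ n"
    using n pos[of 0] by (simp add: pos_divide_less_eq mult.commute)
  ultimately have upper: "t < s (- int n + int (2 * n))"
    by simp
  show ?thesis by (rule int_crossing[OF lower upper])
qed

section \<open>Discretizations of quasi-concave functions\<close>

lemma equiv_normsI:
  assumes "0 < a" "0 < b" "\<And>x. N x \<le> ennreal a * N' x" "\<And>x. N' x \<le> ennreal b * N x"
  shows "equiv_norms N N'"
proof -
  have "ennreal (1 / a) * N x \<le> N' x" for x
  proof -
    have "ennreal (1 / a) * N x \<le> ennreal (1 / a) * (ennreal a * N' x)"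
      by (intro mult_left_mono assms(3)) simp
    also have "\<dots> = N' x"
      using assms(1) by (simp add: mult.assoc[symmetric] flip: ennreal_mult)
    finally show ?thesis .
  qed
  then show ?thesis
    unfolding equiv_norms_def using assms by (intro exI[of _ "1 / a"] exI[of _ b]) auto
qed

locale quasi_concave_discretization =
  fixes \<psi> :: "real \<Rightarrow> real" and s :: "int \<Rightarrow> real"
  assumes pos: "\<And>t. t > 0 \<Longrightarrow> \<psi> t > 0"
    and mono: "mono_on {0<..} \<psi>"
    and quotient_antimono: "antimono_on {0<..} (\<lambda>t. \<psi> t / t)"
    and discretizing: "discretizing_seq \<psi> s"
begin

lemma s_pos: "s k > 0"
  using discretizing by (simp add: discretizing_seq_def strongly_increasing_def)

lemma s_doubling: "2 * s k \<le> s (k + 1)"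
  using discretizing by (simp add: discretizing_seq_def strongly_increasing_doubling)

lemma s_mono:
  assumes "j \<le> k"
  shows "s j \<le> s k"
proof -
  have "s j \<le> s j * 2 ^ nat (k - j)"
    using mult_left_mono[of 1 "2 ^ nat (k - j)" "s j"] s_pos[of j] by simp
  also have "\<dots> \<le> s k"
    using doubling_power_le[of s j k] s_doubling assms by blast
  finally show ?thesis .
qed

lemma psi_s_pos: "\<psi> (s k) > 0"
  using pos s_pos by blast

lemma psi_s_doubling: "2 * \<psi> (s k) \<le> \<psi> (s (k + 1))"
  using discretizing strongly_increasing_doubling[of "\<lambda>k. \<psi> (s k)" k]
  by (simp add: discretizing_seq_def)

lemma quotient_s_halving: "2 * (\<psi> (s (k + 1)) / s (k + 1)) \<le> \<psi> (s k) / s k"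
  using discretizing strongly_decreasing_halving[of "\<lambda>k. \<psi> (s k) / s k"]
  by (simp add: discretizing_seq_def)

lemma psi_le: "0 < a \<Longrightarrow> a \<le> b \<Longrightarrow> \<psi> a \<le> \<psi> b"
  using mono by (auto intro: mono_onD)

lemma quotient_le: "0 < a \<Longrightarrow> a \<le> b \<Longrightarrow> \<psi> b / b \<le> \<psi> a / a"
  using monotone_onD[OF quotient_antimono, of a b] by auto

definition kernel :: "int \<Rightarrow> real \<Rightarrow> real" where
  "kernel k t = min 1 (s k / t) * \<psi> t / \<psi> (s k)"

lemma kernel_nonneg: "t > 0 \<Longrightarrow> kernel k t \<ge> 0"
  unfolding kernel_def using pos[of t] psi_s_pos[of k] s_pos[of k] by simp

lemma kernel_below: "s k \<le> t \<Longrightarrow> kernel k t = (\<psi> t / t) / (\<psi> (s k) / s k)"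
  unfolding kernel_def using s_pos[of k] by (simp add: min_def field_simps)

lemma kernel_above: "0 < t \<Longrightarrow> t \<le> s k \<Longrightarrow> kernel k t = \<psi> t / \<psi> (s k)"
  unfolding kernel_def by (simp add: min_def field_simps)

lemma kernel_decay:
  assumes t: "s j \<le> t" "t \<le> s (j + 1)"
  shows "kernel k t * 2 ^ nat \<bar>k - j\<bar> \<le> 2"
proof -
  have t_pos: "0 < t" using t s_pos[of j] by simp
  show ?thesis
  proof (cases "k \<le> j")
  case True
  have "\<psi> t / t * 2 ^ nat (j - k) \<le> \<psi> (s j) / s j * 2 ^ nat (j - k)"
    using t s_pos[of j] by (intro mult_right_mono quotient_le) auto
  also have "\<dots> \<le> \<psi> (s k) / s k"
    using halving_power_le[of "\<lambda>k. \<psi> (s k) / s k", OF quotient_s_halving True] .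
  finally have "(\<psi> t / t * 2 ^ nat (j - k)) / (\<psi> (s k) / s k) \<le> 1"
    using psi_s_pos[of k] s_pos[of k] by (simp only: divide_le_eq_1_pos divide_pos_pos)
  moreover have "kernel k t * 2 ^ nat \<bar>k - j\<bar> = (\<psi> t / t * 2 ^ nat (j - k)) / (\<psi> (s k) / s k)"
    using True t s_mono[OF True] by (simp add: kernel_below)
  ultimately show ?thesis by simp
next
  case False
  have "\<psi> t * 2 ^ nat (k - (j + 1)) \<le> \<psi> (s (j + 1)) * 2 ^ nat (k - (j + 1))"
    using t t_pos by (intro mult_right_mono psi_le) auto
  also have "\<dots> \<le> \<psi> (s k)"
    using False by (intro doubling_power_le[of "\<lambda>k. \<psi> (s k)", OF psi_s_doubling]) simp
  finally have "\<psi> t * 2 ^ nat (k - (j + 1)) \<le> \<psi> (s k)" .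
  moreover have "nat \<bar>k - j\<bar> = Suc (nat (k - (j + 1)))"
    using False by simp
  moreover have "t \<le> s k"
    using False t s_mono[of "j + 1" k] by simp
  ultimately show ?thesis
    using t_pos psi_s_pos[of k] by (simp add: kernel_above field_simps)
qed
qed

lemma kernel_ge_half:
  assumes t: "s k \<le> t" "t \<le> s (k + 1)"
  shows "1/2 \<le> kernel k t \<or> 1/2 \<le> kernel (k + 1) t"
proof -
  have t_pos: "0 < t" using t s_pos[of k] by simp
  obtain Z1 Z2 where Z: "Z1 \<union> Z2 = UNIV"
    "\<forall>k\<in>Z1. \<psi> (s (k + 1)) \<le> 2 * \<psi> (s k)"
    "\<forall>k\<in>Z2. \<psi> (s k) / s k \<le> 2 * (\<psi> (s (k + 1)) / s (k + 1))"
    using discretizing unfolding discretizing_seq_def by blast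
  show ?thesis
  proof (cases "k \<in> Z1")
    case True
    have "\<psi> (s k) \<le> \<psi> t" using t s_pos[of k] by (intro psi_le) auto
    then have "\<psi> (s (k + 1)) \<le> 2 * \<psi> t" using True Z(2) by fastforce
    then have "1/2 \<le> kernel (k + 1) t"
      using t t_pos psi_s_pos[of "k + 1"] by (simp add: kernel_above field_simps)
    then show ?thesis ..
  next
    case False
    have "\<psi> (s (k + 1)) / s (k + 1) \<le> \<psi> t / t" using t t_pos by (intro quotient_le) auto
    then have "\<psi> (s k) / s k \<le> 2 * (\<psi> t / t)" using False Z(1,3) by fastforce
    then have "1/2 \<le> kernel k t"
      using t psi_s_pos[of k] s_pos[of k] by (simp add: kernel_below field_simps)
    then show ?thesis ..
  qed
qed

definition kernel_norm :: "ennreal \<Rightarrow> ennreal \<Rightarrow> (int \<Rightarrow> real) \<Rightarrow> (int \<Rightarrow> real) \<Rightarrow> ennreal" where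
  "kernel_norm p q tt Y = lp_on p UNIV (\<lambda>k. lp_on q UNIV (\<lambda>i. ennreal (kernel k (tt i) * Y i)))"

definition block_norm :: "ennreal \<Rightarrow> ennreal \<Rightarrow> (int \<Rightarrow> real) \<Rightarrow> (int \<Rightarrow> real) \<Rightarrow> ennreal" where
  "block_norm p q tt Y =
     lp_on p UNIV (\<lambda>k. lp_on q {i. s k \<le> tt i \<and> tt i \<le> s (k + 1)} (\<lambda>i. ennreal (Y i)))"

lemma block_le_kernel_norms:
  assumes q: "1 \<le> q" and tt: "\<And>i. tt i > 0" and Y: "\<And>i. 0 \<le> Y i"
  shows "lp_on q {i. s k \<le> tt i \<and> tt i \<le> s (k + 1)} (\<lambda>i. ennreal (Y i))
    \<le> 8 * (lp_on q UNIV (\<lambda>i. ennreal (kernel k (tt i) * Y i))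
          + lp_on q UNIV (\<lambda>i. ennreal (kernel (k + 1) (tt i) * Y i)))"
proof -
  let ?f = "\<lambda>k i. ennreal (kernel k (tt i) * Y i)"
  have "ennreal (Y i) \<le> 2 * (?f k i + ?f (k + 1) i)" if "s k \<le> tt i" "tt i \<le> s (k + 1)" for i
  proof -
    have "Y i \<le> 2 * (a * Y i)" if "1/2 \<le> a" for a
      using mult_right_mono[of 1 "2 * a" "Y i"] that Y[of i] by (simp add: mult.assoc)
    then have "Y i \<le> 2 * (kernel k (tt i) * Y i) \<or> Y i \<le> 2 * (kernel (k + 1) (tt i) * Y i)"
      using kernel_ge_half[OF that] by blast
    moreover have "0 \<le> kernel k (tt i) * Y i" "0 \<le> kernel (k + 1) (tt i) * Y i"
      using kernel_nonneg[OF tt] Y by simp_all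
    moreover have "y \<le> 2 * (a + b)" if "0 \<le> a" "0 \<le> b" "y \<le> 2 * a \<or> y \<le> 2 * b"
      for a b y :: real
      using that by auto
    ultimately have "Y i \<le> 2 * (kernel k (tt i) * Y i + kernel (k + 1) (tt i) * Y i)"
      by blast
    then have "ennreal (Y i) \<le> ennreal (2 * (kernel k (tt i) * Y i + kernel (k + 1) (tt i) * Y i))"
      by (rule ennreal_leI)
    also have "\<dots> = 2 * (?f k i + ?f (k + 1) i)"
      using Y[of i] kernel_nonneg[OF tt] by (simp add: ennreal_mult)
    finally show ?thesis .
  qed
  then have "lp_on q {i. s k \<le> tt i \<and> tt i \<le> s (k + 1)} (\<lambda>i. ennreal (Y i))
      \<le> lp_on q UNIV (\<lambda>i. 2 * (?f k i + ?f (k + 1) i))"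
    by (intro lp_on_mono_set[OF q]) auto
  also have "\<dots> = 2 * lp_on q UNIV (\<lambda>i. ?f k i + ?f (k + 1) i)"
    by (rule lp_on_cmult[OF q]) simp
  also have "\<dots> \<le> 2 * (4 * (lp_on q UNIV (?f k) + lp_on q UNIV (?f (k + 1))))"
    by (intro mult_left_mono lp_on_add_le[OF q]) simp
  finally show ?thesis
    by (simp add: mult.assoc[symmetric])
qed

lemma block_norm_le_kernel_norm:
  assumes p: "1 \<le> p" and q: "1 \<le> q" and tt: "\<And>i. tt i > 0" and Y: "\<And>i. 0 \<le> Y i"
  shows "block_norm p q tt Y \<le> 64 * kernel_norm p q tt Y"
proof -
  define g where "g = (\<lambda>k. lp_on q UNIV (\<lambda>i. ennreal (kernel k (tt i) * Y i)))"
  have "block_norm p q tt Y \<le> lp_on p UNIV (\<lambda>k. 8 * (g k + g (k + 1)))"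
    unfolding block_norm_def g_def by (intro lp_on_mono[OF p] block_le_kernel_norms[OF q tt Y])
  also have "\<dots> = 8 * lp_on p UNIV (\<lambda>k. g k + g (k + 1))"
    by (rule lp_on_cmult[OF p]) simp
  also have "\<dots> \<le> 8 * (4 * (lp_on p UNIV g + lp_on p UNIV (\<lambda>k. g (k + 1))))"
    by (intro mult_left_mono lp_on_add_le[OF p]) simp
  also have "\<dots> = 64 * lp_on p UNIV g"
    using lp_on_shift[of p g] by (simp add: mult.assoc[symmetric] flip: mult_2)
  finally show ?thesis
    unfolding kernel_norm_def g_def .
qed

lemma kernel_norm_le_block_norm:
  assumes p: "1 \<le> p" and q: "1 \<le> q" and tt: "\<And>i. tt i > 0" and Y: "\<And>i. 0 \<le> Y i"
  shows "kernel_norm p q tt Y \<le> 128 * block_norm p q tt Y"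
proof -
  define M where "M m = {i. s m \<le> tt i \<and> tt i \<le> s (m + 1)}" for m
  define B where "B m = lp_on q (M m) (\<lambda>i. ennreal (Y i))" for m
  have "\<forall>i. \<exists>m. s m \<le> tt i \<and> tt i < s (m + 1)"
    using strongly_increasing_bracket discretizing tt by (simp add: discretizing_seq_def)
  then obtain j where j: "\<And>i. s (j i) \<le> tt i" "\<And>i. tt i < s (j i + 1)"
    by metis
  have row: "lp_on q UNIV (\<lambda>i. ennreal (kernel k (tt i) * Y i))
      \<le> 16 * (SUP m. ennreal ((3/4) ^ nat \<bar>k - m\<bar>) * B m)" for k
    unfolding B_def
  proof (rule lp_on_le_SUP_geometric_blocks[OF q Y])
    show "0 \<le> kernel k (tt i) * Y i" for i
      using kernel_nonneg[OF tt] Y by simp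
    show "i \<in> M (j i)" for i
      using j[of i] by (simp add: M_def)
    show "kernel k (tt i) * Y i \<le> 2 * (1/2) ^ nat \<bar>k - j i\<bar> * Y i" for i
    proof (rule mult_right_mono[OF _ Y])
      have "kernel k (tt i) * 2 ^ nat \<bar>k - j i\<bar> \<le> 2"
        using kernel_decay j[of i] by (simp add: less_imp_le)
      then show "kernel k (tt i) \<le> 2 * (1/2) ^ nat \<bar>k - j i\<bar>"
        by (simp add: power_one_over field_simps)
    qed
  qed
  have "kernel_norm p q tt Y \<le> 16 * lp_on p UNIV (\<lambda>k. SUP m. ennreal ((3/4) ^ nat \<bar>k - m\<bar>) * B m)"
    unfolding kernel_norm_def using lp_on_mono[OF p row] by (simp add: lp_on_cmult[OF p])
  also have "\<dots> \<le> 16 * (8 * lp_on p UNIV B)"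
    by (intro mult_left_mono lp_on_SUP_geometric_le[OF p]) simp
  finally show ?thesis
    by (simp add: block_norm_def B_def[abs_def] M_def mult.assoc[symmetric])
qed

lemma K_lq_approx_scaled_eq:
  assumes q: "1 \<le> q" and tt: "\<And>i. tt i > 0"
  shows "ennreal (1 / \<psi> (s k)) * K_lq_approx q tt (s k) x
    = lp_on q UNIV (\<lambda>i. ennreal (kernel k (tt i) * (\<bar>x i\<bar> / \<psi> (tt i))))"
proof -
  have scaled: "ennreal (1 / \<psi> (s k)) * ennreal (min 1 (s k / tt i) * \<bar>x i\<bar>)
      = ennreal (kernel k (tt i) * (\<bar>x i\<bar> / \<psi> (tt i)))" for i
  proof -
    have "kernel k (tt i) * (\<bar>x i\<bar> / \<psi> (tt i)) = 1 / \<psi> (s k) * (min 1 (s k / tt i) * \<bar>x i\<bar>)"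
      unfolding kernel_def using pos[OF tt[of i]] psi_s_pos[of k] by (simp add: field_simps)
    moreover have "0 \<le> min 1 (s k / tt i) * \<bar>x i\<bar>"
      using s_pos[of k] tt[of i] by simp
    ultimately show ?thesis
      using psi_s_pos[of k] by (simp add: ennreal_mult'[symmetric])
  qed
  show ?thesis
    unfolding K_lq_approx_def
    by (subst lp_on_cmult[OF q, symmetric])
      (simp_all only: scaled ennreal_neq_top not_False_eq_True)
qed

lemma interp_norm_eq_lp_on:
  "interp_norm N0 N1 \<psi> s p x = lp_on p UNIV (\<lambda>k. ennreal (1 / \<psi> (s k)) * K_fun N0 N1 (s k) x)"
  using psi_s_pos
  by (simp add: interp_norm_def divide_ennreal_def inverse_ennreal mult.commute inverse_eq_divide)

lemma interp_norm_le_kernel_norm: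
  assumes p: "1 \<le> p" and q: "1 \<le> q" and tt: "\<And>i. tt i > 0"
  shows "interp_norm (lq_norm q) (weighted (lq_norm q) (\<lambda>i. 1 / tt i)) \<psi> s p x
    \<le> 2 * kernel_norm p q tt (\<lambda>i. \<bar>x i\<bar> / \<psi> (tt i))"
proof -
  let ?K = "K_fun (lq_norm q) (weighted (lq_norm q) (\<lambda>i. 1 / tt i))"
  have "ennreal (1 / \<psi> (s k)) * ?K (s k) x
      \<le> 2 * (ennreal (1 / \<psi> (s k)) * K_lq_approx q tt (s k) x)" for k
    using mult_left_mono[OF K_fun_weighted_lq_le[OF q tt s_pos[of k]], of "ennreal (1 / \<psi> (s k))"]
    by (simp add: mult_ac)
  then have "lp_on p UNIV (\<lambda>k. ennreal (1 / \<psi> (s k)) * ?K (s k) x)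
      \<le> lp_on p UNIV (\<lambda>k. 2 * (ennreal (1 / \<psi> (s k)) * K_lq_approx q tt (s k) x))"
    by (rule lp_on_mono[OF p])
  then show ?thesis
    by (simp add: interp_norm_eq_lp_on kernel_norm_def lp_on_cmult[OF p]
        K_lq_approx_scaled_eq[OF q tt])
qed

lemma kernel_norm_le_interp_norm:
  assumes p: "1 \<le> p" and q: "1 \<le> q" and tt: "\<And>i. tt i > 0"
  shows "kernel_norm p q tt (\<lambda>i. \<bar>x i\<bar> / \<psi> (tt i))
    \<le> 4 * interp_norm (lq_norm q) (weighted (lq_norm q) (\<lambda>i. 1 / tt i)) \<psi> s p x"
proof -
  let ?K = "K_fun (lq_norm q) (weighted (lq_norm q) (\<lambda>i. 1 / tt i))"
  have "ennreal (1 / \<psi> (s k)) * K_lq_approx q tt (s k) x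
      \<le> 4 * (ennreal (1 / \<psi> (s k)) * ?K (s k) x)" for k
    using mult_left_mono[OF K_lq_approx_le_K_fun[OF q tt s_pos[of k]], of "ennreal (1 / \<psi> (s k))"]
    by (simp add: mult_ac)
  then have "lp_on p UNIV (\<lambda>k. ennreal (1 / \<psi> (s k)) * K_lq_approx q tt (s k) x)
      \<le> lp_on p UNIV (\<lambda>k. 4 * (ennreal (1 / \<psi> (s k)) * ?K (s k) x))"
    by (rule lp_on_mono[OF p])
  then show ?thesis
    by (simp add: interp_norm_eq_lp_on kernel_norm_def lp_on_cmult[OF p]
        K_lq_approx_scaled_eq[OF q tt])
qed

lemma weighted_lp_lq_blocks_eq_block_norm:
  assumes "\<And>i. tt i > 0"
  shows "weighted (lp_lq_blocks p q (\<lambda>k. {i. s k \<le> tt i \<and> tt i \<le> s (k + 1)}))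
      (\<lambda>i. 1 / \<psi> (tt i)) x = block_norm p q tt (\<lambda>i. \<bar>x i\<bar> / \<psi> (tt i))"
  using less_imp_le[OF pos[OF assms]]
  by (simp add: weighted_def lp_lq_blocks_def block_norm_def abs_mult)

theorem interp_norm_weighted_lq_equiv_blocks:
  assumes p: "1 \<le> p" and q: "1 \<le> q" and tt: "\<And>i. tt i > 0"
  shows "equiv_norms (interp_norm (lq_norm q) (weighted (lq_norm q) (\<lambda>i. 1 / tt i)) \<psi> s p)
           (weighted (lp_lq_blocks p q (\<lambda>k. {i. s k \<le> tt i \<and> tt i \<le> s (k + 1)}))
              (\<lambda>i. 1 / \<psi> (tt i)))"
proof -
  let ?I = "interp_norm (lq_norm q) (weighted (lq_norm q) (\<lambda>i. 1 / tt i)) \<psi> s p"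
  let ?B = "\<lambda>x. block_norm p q tt (\<lambda>i. \<bar>x i\<bar> / \<psi> (tt i))"
  have "?I x \<le> ennreal 256 * ?B x \<and> ?B x \<le> ennreal 256 * ?I x" for x
  proof
    have Y: "0 \<le> \<bar>x i\<bar> / \<psi> (tt i)" for i
      using pos[OF tt[of i]] by simp
    have "?I x \<le> 2 * (128 * ?B x)"
      using interp_norm_le_kernel_norm[OF p q tt] kernel_norm_le_block_norm[OF p q tt Y]
      by (meson order_trans mult_left_mono zero_le)
    then show "?I x \<le> ennreal 256 * ?B x"
      by (simp add: mult.assoc[symmetric])
    have "?B x \<le> 64 * (4 * ?I x)"
      using block_norm_le_kernel_norm[OF p q tt Y] kernel_norm_le_interp_norm[OF p q tt]
      by (meson order_trans mult_left_mono zero_le)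
    then show "?B x \<le> ennreal 256 * ?I x"
      by (simp add: mult.assoc[symmetric])
  qed
  then have "equiv_norms ?I ?B"
    by (intro equiv_normsI[of 256 256]) auto
  moreover have "weighted (lp_lq_blocks p q (\<lambda>k. {i. s k \<le> tt i \<and> tt i \<le> s (k + 1)}))
      (\<lambda>i. 1 / \<psi> (tt i)) = ?B"
    using weighted_lp_lq_blocks_eq_block_norm[OF tt] by (rule ext)
  ultimately show ?thesis
    by simp
qed

end

theorem corollary3p5:
  fixes p q :: ennreal
    and \<phi>0 \<phi>1 \<phi> :: "real \<Rightarrow> real"
    and \<tau> z tt :: "int \<Rightarrow> real"
  assumes "1 \<le> p" and "1 \<le> q"
    and "nd_quasi_concave \<phi>0" and "nd_quasi_concave \<phi>1" and "nd_quasi_concave \<phi>"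
    and "discretizing_seq \<phi>0 \<tau>"
    and "discretizing_seq \<phi>1 z"
    and "discretizing_seq (compose_qc \<phi> \<phi>0 \<phi>1) tt"
  shows "equiv_norms
           (interp_norm (lq_norm q) (weighted (lq_norm q) (\<lambda>i. 1 / tt i)) \<phi>0 \<tau> p)
           (weighted (lp_lq_blocks p q (\<lambda>k. {i. \<tau> k \<le> tt i \<and> tt i \<le> \<tau> (k + 1)}))
              (\<lambda>i. 1 / \<phi>0 (tt i)))
       \<and> equiv_norms
           (interp_norm (lq_norm q) (weighted (lq_norm q) (\<lambda>i. 1 / tt i)) \<phi>1 z p)
           (weighted (lp_lq_blocks p q (\<lambda>k. {i. z k \<le> tt i \<and> tt i \<le> z (k + 1)}))
              (\<lambda>i. 1 / \<phi>1 (tt i)))"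
proof -
  have tt_pos: "\<And>i. tt i > 0"
    using assms(8) by (simp add: discretizing_seq_def strongly_increasing_def)
  have "quasi_concave_discretization \<phi>0 \<tau>" "quasi_concave_discretization \<phi>1 z"
    using assms(3,4,6,7) by (auto simp: quasi_concave_discretization_def nd_quasi_concave_def)
  then show ?thesis
    using quasi_concave_discretization.interp_norm_weighted_lq_equiv_blocks
      [where tt = tt, OF _ assms(1,2) tt_pos]
    by blast
qed

end
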